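(* For $\rho>0$ let $\upsilon(\rho)=\sqrt{\frac{1+\sqrt{1+\rho^2}}{2}}$ and $E(\rho)=\frac12\left(\arccos\frac{1}{\upsilon(\rho)}-\frac{2(\upsilon(\rho)-1)}{\rho}\right)$. Then for all $\rho>0$, \[E(\rho)\geq \frac18\rho-\frac{5}{384}\rho^3,\] and moreover \[E(\rho)=\frac{\pi}{4}-\frac{\beta}{2}-\frac{\sin 2\beta}{4(1+\sin\beta)},\quad\text{where } \beta=\arcsin\frac{1}{\upsilon(\rho)}.\] *)

theory Defs
  imports Complex_Main
begin

definition upsilon :: "real \<Rightarrow> real" where
  "upsilon \<rho> = sqrt ((1 + sqrt (1 + \<rho>^2)) / 2)"

definition E :: "real \<Rightarrow> real" where
  "E \<rho> = (1/2) * (arccos (1 / upsilon \<rho>) - 2 * (upsilon \<rho> - 1) / \<rho>)"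

end

theory Submission imports Defs begin

text \<open>Substitute the half-angle tangent \<open>v\<close> of \<open>arccos (1 / upsilon \<rho>)\<close>: then
  \<open>upsilon \<rho> = (1 + v\<^sup>2) / (1 - v\<^sup>2)\<close>, \<open>\<rho> = 4v(1 + v\<^sup>2) / (1 - v\<^sup>2)\<^sup>2\<close> with \<open>0 < v < 1\<close>, and
  \<open>E \<rho> = arctan v - v(1 - v\<^sup>2) / (2(1 + v\<^sup>2))\<close>. Bounding \<open>arctan v \<ge> v - v\<^sup>3/3\<close> leaves a rational
  function whose numerator is \<open>v\<^sup>5\<close> times a sextic in \<open>v\<^sup>2\<close> that is positive on \<open>(0,1)\<close>. The closed
  form in \<open>\<beta>\<close> holds because \<open>\<beta> = \<pi>/2 - 2 arctan v\<close>, so \<open>sin \<beta>\<close> and \<open>cos \<beta>\<close> are the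
  half-angle expressions in \<open>v\<close>.\<close>

lemma upsilon_gt_one:
  assumes "\<rho> \<noteq> 0"
  shows "1 < upsilon \<rho>"
proof -
  have "1 < sqrt (1 + \<rho>^2)" using assms by (simp add: real_less_rsqrt)
  then show ?thesis unfolding upsilon_def by (simp add: real_less_rsqrt)
qed

lemma upsilon_sq_relation: "4 * upsilon \<rho> ^ 2 * (upsilon \<rho> ^ 2 - 1) = \<rho>^2"
proof -
  define w where "w = sqrt (1 + \<rho>^2)"
  have "2 * upsilon \<rho> ^ 2 = 1 + w"
    unfolding upsilon_def w_def by (simp add: add_nonneg_nonneg)
  then have "4 * upsilon \<rho> ^ 2 * (upsilon \<rho> ^ 2 - 1) = (1 + w) * (w - 1)"
    by algebra
  also have "\<dots> = \<rho>^2" by (simp add: w_def algebra_simps flip: power2_eq_square)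
  finally show ?thesis .
qed

lemma half_angle_parametrization:
  assumes "\<rho> > 0"
  obtains v where "0 < v" "v < 1" "upsilon \<rho> = (1 + v^2) / (1 - v^2)"
    "\<rho> = 4 * v * (1 + v^2) / (1 - v^2)^2"
proof
  define u where "u = upsilon \<rho>"
  have u1: "1 < u" using upsilon_gt_one assms u_def by simp
  define v where "v = sqrt ((u - 1) / (u + 1))"
  show v0: "0 < v" and v1: "v < 1" using u1 by (auto simp: v_def)
  have "v^2 < 1" using v0 v1 by (simp add: power_less_one_iff)
  then have d: "1 - v^2 \<noteq> 0" by simp
  have "v^2 = (u - 1) / (u + 1)" using u1 by (simp add: v_def)
  then have "u * (1 - v^2) = 1 + v^2" using u1 by (simp add: field_simps)
  then show uv: "upsilon \<rho> = (1 + v^2) / (1 - v^2)" using d by (simp add: u_def eq_divide_eq)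
  have "\<rho>^2 = 4 * u^2 * (u^2 - 1)" using upsilon_sq_relation u_def by simp
  also have "\<dots> = (4 * v * (1 + v^2) / (1 - v^2)^2)^2"
    using d unfolding u_def uv by (simp add: field_simps) algebra
  finally have "\<rho>^2 = (4 * v * (1 + v^2) / (1 - v^2)^2)^2" .
  moreover have "0 \<le> 4 * v * (1 + v^2) / (1 - v^2)^2" using v0 by simp
  ultimately show "\<rho> = 4 * v * (1 + v^2) / (1 - v^2)^2"
    using assms by (meson less_imp_le power2_eq_imp_eq)
qed

lemma cos_double_arctan: "cos (2 * arctan v) = (1 - v^2) / (1 + v^2)"
  using cos_tan_half[of "arctan v"] by (simp add: tan_arctan)

lemma sin_double_arctan: "sin (2 * arctan v) = 2 * v / (1 + v^2)"
  using sin_tan_half[of "arctan v"] by (simp add: tan_arctan)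

lemma arccos_half_angle:
  assumes "0 \<le> v"
  shows "arccos ((1 - v^2) / (1 + v^2)) = 2 * arctan v"
  using arctan_ubound[of v] assms by (simp flip: cos_double_arctan add: arccos_cos)

lemma E_half_angle:
  assumes "0 < v" "v < 1" "upsilon \<rho> = (1 + v^2) / (1 - v^2)"
    and "\<rho> = 4 * v * (1 + v^2) / (1 - v^2)^2"
  shows "E \<rho> = arctan v - v * (1 - v^2) / (2 * (1 + v^2))"
proof -
  have "v^2 < 1" using assms by (simp add: power_less_one_iff)
  then have d: "1 - v^2 \<noteq> 0" by simp
  have p: "1 + v^2 \<noteq> 0" by (simp add: add_nonneg_eq_0_iff)
  have "(1 + v^2) / (1 - v^2) - 1 = 2 * v^2 / (1 - v^2)" using d by (simp add: field_simps)
  moreover have "2 * (2 * v^2 / D) / (4 * v * P / D^2) = v * D / P" if "D \<noteq> 0" "P \<noteq> 0" for D P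
    using that \<open>0 < v\<close> by (simp add: field_simps power2_eq_square)
  ultimately have "2 * ((1 + v^2) / (1 - v^2) - 1) / (4 * v * (1 + v^2) / (1 - v^2)^2)
      = v * (1 - v^2) / (1 + v^2)"
    using d p by simp
  then have "2 * (upsilon \<rho> - 1) / \<rho> = v * (1 - v^2) / (1 + v^2)"
    by (simp only: assms(3) flip: assms(4))
  moreover have "1 / upsilon \<rho> = (1 - v^2) / (1 + v^2)" using assms(3) by simp
  ultimately have "E \<rho> = (1/2) * (2 * arctan v - v * (1 - v^2) / (1 + v^2))"
    unfolding E_def using arccos_half_angle[of v] assms(1) by simp
  then show ?thesis using p by (simp add: field_simps)
qed

lemma half_angle_arcsin_form:
  assumes "0 \<le> v" and "\<beta> = arcsin ((1 - v^2) / (1 + v^2))"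
  shows "arctan v - v * (1 - v^2) / (2 * (1 + v^2))
    = pi / 4 - \<beta> / 2 - sin (2 * \<beta>) / (4 * (1 + sin \<beta>))"
proof -
  have p: "0 < 1 + v^2" by (simp add: add_pos_nonneg)
  have "-1 \<le> (1 - v^2) / (1 + v^2)" "(1 - v^2) / (1 + v^2) \<le> 1"
    using p by (simp_all add: field_simps)
  then have \<beta>: "\<beta> = pi / 2 - 2 * arctan v"
    using assms by (simp add: arcsin_arccos_eq arccos_half_angle)
  have sin\<beta>: "sin \<beta> = (1 - v^2) / (1 + v^2)"
    unfolding \<beta> by (simp add: sin_diff cos_double_arctan)
  have cos\<beta>: "cos \<beta> = 2 * v / (1 + v^2)"
    unfolding \<beta> by (simp add: cos_diff sin_double_arctan)
  have "1 + sin \<beta> = 2 / (1 + v^2)" unfolding sin\<beta> using p by (simp add: field_simps)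
  moreover have "2 * (D / P) * (2 * v / P) / (4 * (2 / P)) = v * D / (2 * P)" if "P \<noteq> 0" for D P
    using that by (simp add: field_simps power2_eq_square)
  ultimately have "sin (2 * \<beta>) / (4 * (1 + sin \<beta>)) = v * (1 - v^2) / (2 * (1 + v^2))"
    unfolding sin_double using p by (simp only: sin\<beta> cos\<beta>)
  moreover have "pi / 4 - \<beta> / 2 = arctan v" unfolding \<beta> by (simp add: field_simps)
  ultimately show ?thesis by simp
qed

lemma arctan_ge_cubic:
  fixes x :: real
  assumes "0 \<le> x"
  shows "x - x^3 / 3 \<le> arctan x"
proof -
  let ?g = "\<lambda>y::real. arctan y - y + y^3 / 3"
  have "?g 0 \<le> ?g x"
  proof (rule DERIV_nonneg_imp_nondecreasing[OF assms])
    fix y :: real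
    have p: "1 + y^2 \<noteq> 0" by (simp add: add_nonneg_eq_0_iff)
    have "(?g has_real_derivative (inverse (1 + y^2) - 1 + y^2)) (at y)"
      by (auto intro!: derivative_eq_intros simp: power2_eq_square)
    moreover have "inverse (1 + y^2) - 1 + y^2 = y^4 / (1 + y^2)"
      using p by (simp add: field_simps)
    ultimately show "\<exists>d. (?g has_real_derivative d) (at y) \<and> 0 \<le> d" by auto
  qed
  then show ?thesis by simp
qed

text \<open>Using \<open>a\<^sup>4 \<le> a\<^sup>3\<close> and \<open>a\<^sup>6 \<le> a\<^sup>5\<close>, the sextic is at least
  \<open>24 + (75 - 2601/66) a + 66 a (a - 51/66)\<^sup>2 + 17 a\<^sup>5\<close>.\<close>
lemma gap_polynomial_pos:
  fixes a :: real
  assumes "0 < a" "a < 1"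
  shows "0 < 24 + 75*a - 102*a^2 + 138*a^3 - 72*a^4 + 19*a^5 - 2*a^6"
proof -
  have "a^4 \<le> a^3" "a^6 \<le> a^5" using assms by (auto intro!: power_decreasing)
  moreover have "0 \<le> a * (a - 51/66)^2" "0 \<le> a^5" using assms by simp_all
  moreover have "a * (a - 51/66)^2 = a^3 - (51/33)*a^2 + (2601/4356)*a"
    by (simp add: power2_eq_square power3_eq_cube algebra_simps)
  ultimately show ?thesis using assms by linarith
qed

lemma half_angle_gap_identity:
  fixes v :: real
  assumes "0 < v" "v < 1"
  shows "v - v^3/3 - v*(1-v^2)/(2*(1+v^2))
      - ((4*v*(1+v^2)/(1-v^2)^2)/8 - 5/384*(4*v*(1+v^2)/(1-v^2)^2)^3)
    = v^5 * (24 + 75*v^2 - 102*(v^2)^2 + 138*(v^2)^3 - 72*(v^2)^4 + 19*(v^2)^5 - 2*(v^2)^6)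
      / (6*(1+v^2)*(1-v^2)^6)"
proof -
  have "v^2 < 1" using assms by (simp add: power_less_one_iff)
  then have "1 - v^2 \<noteq> 0" by simp
  moreover have "1 + v^2 \<noteq> 0" by (simp add: add_nonneg_eq_0_iff)
  moreover have "v - v^3/3 - v*D/(2*P) - ((4*v*P/D^2)/8 - 5/384*(4*v*P/D^2)^3)
      = v^5 * (24 + 75*v^2 - 102*(v^2)^2 + 138*(v^2)^3 - 72*(v^2)^4 + 19*(v^2)^5 - 2*(v^2)^6)
        / (6*P*D^6)"
    if "D \<noteq> 0" "P \<noteq> 0" "D = 1 - v^2" "P = 1 + v^2" for D P
    using that(1,2) by (simp add: field_simps, unfold that(3,4), algebra)
  ultimately show ?thesis by blast
qed

lemma half_angle_lower_bound:
  fixes v :: real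
  assumes "0 < v" "v < 1"
  shows "(4*v*(1+v^2)/(1-v^2)^2)/8 - 5/384*(4*v*(1+v^2)/(1-v^2)^2)^3
    \<le> arctan v - v*(1-v^2)/(2*(1+v^2))"
proof -
  have "0 < v^2" "v^2 < 1" using assms by (simp_all add: power_less_one_iff)
  then have "0 < 24 + 75*v^2 - 102*(v^2)^2 + 138*(v^2)^3 - 72*(v^2)^4 + 19*(v^2)^5 - 2*(v^2)^6"
    by (rule gap_polynomial_pos)
  with \<open>v^2 < 1\<close> assms have "0 \<le> v^5
      * (24 + 75*v^2 - 102*(v^2)^2 + 138*(v^2)^3 - 72*(v^2)^4 + 19*(v^2)^5 - 2*(v^2)^6)
      / (6*(1+v^2)*(1-v^2)^6)"
    by (simp add: add_pos_nonneg)
  then show ?thesis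
    using half_angle_gap_identity[OF assms] arctan_ge_cubic[of v] assms by linarith
qed

theorem lemma3p3:
  fixes \<rho> \<beta> :: real
  assumes "\<rho> > 0"
    and "\<beta> = arcsin (1 / upsilon \<rho>)"
  shows "E \<rho> \<ge> \<rho> / 8 - 5 / 384 * \<rho>^3
    \<and> E \<rho> = pi / 4 - \<beta> / 2 - sin (2 * \<beta>) / (4 * (1 + sin \<beta>))"
proof -
  obtain v where v: "0 < v" "v < 1" and upsilon: "upsilon \<rho> = (1 + v^2) / (1 - v^2)"
    and \<rho>: "\<rho> = 4 * v * (1 + v^2) / (1 - v^2)^2"
    using half_angle_parametrization assms(1) by blast
  have E: "E \<rho> = arctan v - v * (1 - v^2) / (2 * (1 + v^2))"
    using E_half_angle v upsilon \<rho> by blast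
  have \<beta>: "\<beta> = arcsin ((1 - v^2) / (1 + v^2))" using assms(2) upsilon by simp
  have "\<rho> / 8 - 5 / 384 * \<rho>^3 \<le> E \<rho>"
    using half_angle_lower_bound[OF v, folded \<rho>] unfolding E by simp
  moreover have "E \<rho> = pi / 4 - \<beta> / 2 - sin (2 * \<beta>) / (4 * (1 + sin \<beta>))"
    unfolding E using half_angle_arcsin_form[OF _ \<beta>] v(1) by simp
  ultimately show ?thesis by blast
qed

end
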